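(* Let $\Phi:\mathbb{R}^n\to(-\infty,\infty]$ be a proper lower semicontinuous convex function, and let $S\subset\mathbb{R}\times\mathbb{R}^n$ be a nonempty set with $\Phi(y)=\sup_{(\alpha,b)\in S}(\alpha+b\cdot y)$ for all $y\in\mathbb{R}^n$. Let $\psi:[0,\infty)\to[0,\infty)$ satisfy $\lim_{t\to\infty}\psi(t)/t=\infty$. Define, for $x\ge0$, $y\in\mathbb{R}^n$, $$\tilde\varphi(x,y):=\sup_{(\alpha,b)\in S}\bigl(\alpha+b\cdot y-\psi(|\alpha|+|b|)\,x\bigr).$$ Then $\tilde\varphi:[0,\infty)\times\mathbb{R}^n\to(-\infty,\infty]$ is convex and lower semicontinuous, $\tilde\varphi(0,y)=\Phi(y)$ for all $y$, $\tilde\varphi(x,y)<\infty$ for all $x>0$, $y\in\mathbb{R}^n$, $x\mapsto\tilde\varphi(x,y)$ is nonincreasing, and $\lim_{x\to0+}\tilde\varphi(x,y)=\Phi(y)$ for every $y\in\mathbb{R}^n$.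
   Context: A convex function is proper if it is not identically $+\infty$. $|\cdot|$ denotes the absolute value on $\mathbb{R}$ and the Euclidean norm on $\mathbb{R}^n$. *)

theory Defs
  imports "HOL-Analysis.Analysis"
begin

text \<open>Convexity of an extended-real valued function on a convex set D
  (values in (-infinity, infinity], so the ereal arithmetic below is unambiguous).\<close>
definition ereal_convex_on :: "'a::real_vector set \<Rightarrow> ('a \<Rightarrow> ereal) \<Rightarrow> bool" where
  "ereal_convex_on D f \<longleftrightarrow> convex D \<and>
     (\<forall>x\<in>D. \<forall>y\<in>D. \<forall>t::real. 0 < t \<and> t < 1 \<longrightarrow>
        f (t *\<^sub>R x + (1 - t) *\<^sub>R y) \<le> ereal t * f x + ereal (1 - t) * f y)"

definition ereal_lsc_on :: "'a::topological_space set \<Rightarrow> ('a \<Rightarrow> ereal) \<Rightarrow> bool" where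
  "ereal_lsc_on D f \<longleftrightarrow> (\<forall>z\<in>D. f z \<le> Liminf (at z within D) f)"

definition ereal_proper :: "('a \<Rightarrow> ereal) \<Rightarrow> bool" where
  "ereal_proper f \<longleftrightarrow> (\<forall>x. f x \<noteq> -\<infinity>) \<and> (\<exists>x. f x \<noteq> \<infinity>)"

end

theory Submission
  imports Defs
begin

text \<open>
  For each \<open>(\<alpha>, b) \<in> S\<close> the function
  \<open>(x, y) \<mapsto> \<alpha> + b \<bullet> y - \<psi> (\<bar>\<alpha>\<bar> + \<bar>b\<bar>) x\<close> is affine and continuous, so their
  supremum is convex and lower semicontinuous; at \<open>x = 0\<close> it is the given representation
  of \<open>\<Phi>\<close>, and it decreases in \<open>x\<close> because \<open>\<psi> \<ge> 0\<close>.  Finiteness for \<open>x > 0\<close> comes from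
  superlinearity: \<open>\<alpha> + b \<bullet> y \<le> (\<bar>\<alpha>\<bar> + \<bar>b\<bar>)(1 + \<bar>y\<bar>)\<close> grows linearly in
  \<open>u = \<bar>\<alpha>\<bar> + \<bar>b\<bar>\<close> while \<open>\<psi>(u) x\<close> grows faster.  Lower semicontinuity and
  monotonicity together give the limit as \<open>x \<rightarrow> 0+\<close>.
\<close>

lemma ereal_convex_on_SUP:
  assumes "convex D" and "\<And>i. i \<in> I \<Longrightarrow> convex_on D (f i)"
  shows "ereal_convex_on D (\<lambda>x. SUP i\<in>I. ereal (f i x))"
  unfolding ereal_convex_on_def
proof (intro conjI ballI allI impI assms(1))
  fix x y and t :: real
  assume xy: "x \<in> D" "y \<in> D" and t: "0 < t \<and> t < 1"
  show "(SUP i\<in>I. ereal (f i (t *\<^sub>R x + (1 - t) *\<^sub>R y)))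
      \<le> ereal t * (SUP i\<in>I. ereal (f i x)) + ereal (1 - t) * (SUP i\<in>I. ereal (f i y))"
  proof (rule SUP_least)
    fix i assume i: "i \<in> I"
    have "f i (t *\<^sub>R x + (1 - t) *\<^sub>R y) \<le> t * f i x + (1 - t) * f i y"
      using assms(2)[OF i] xy t by (simp add: convex_on_def)
    then have "ereal (f i (t *\<^sub>R x + (1 - t) *\<^sub>R y))
        \<le> ereal t * ereal (f i x) + ereal (1 - t) * ereal (f i y)"
      by simp
    also have "\<dots> \<le> ereal t * (SUP i\<in>I. ereal (f i x)) + ereal (1 - t) * (SUP i\<in>I. ereal (f i y))"
      using t i by (intro add_mono ereal_mult_left_mono SUP_upper) auto
    finally show "ereal (f i (t *\<^sub>R x + (1 - t) *\<^sub>R y))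
        \<le> ereal t * (SUP i\<in>I. ereal (f i x)) + ereal (1 - t) * (SUP i\<in>I. ereal (f i y))" .
  qed
qed

lemma eventually_less_SUP_ereal:
  assumes "\<And>i. i \<in> I \<Longrightarrow> (f i \<longlongrightarrow> f i z) F"
    and "a < (SUP i\<in>I. ereal (f i z))"
  shows "eventually (\<lambda>x. a < (SUP i\<in>I. ereal (f i x))) F"
proof -
  from assms(2) obtain i where i: "i \<in> I" "a < ereal (f i z)"
    by (auto simp: less_SUP_iff)
  have "((\<lambda>x. ereal (f i x)) \<longlongrightarrow> ereal (f i z)) F"
    using assms(1)[OF i(1)] by (rule tendsto_ereal)
  then have "eventually (\<lambda>x. a < ereal (f i x)) F"
    using i(2) by (rule order_tendstoD(1))
  then show ?thesis
    by (rule eventually_mono) (use i(1) in \<open>auto intro: less_le_trans SUP_upper\<close>)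
qed

lemma ereal_lsc_on_SUP:
  assumes "\<And>i. i \<in> I \<Longrightarrow> continuous_on D (f i)"
  shows "ereal_lsc_on D (\<lambda>x. SUP i\<in>I. ereal (f i x))"
  unfolding ereal_lsc_on_def le_Liminf_iff
  using assms by (auto simp: continuous_on_def intro!: eventually_less_SUP_ereal)

lemma tendsto_SUP_ereal_if_eventually_le:
  assumes "\<And>i. i \<in> I \<Longrightarrow> (f i \<longlongrightarrow> f i z) F"
    and "eventually (\<lambda>x. (SUP i\<in>I. ereal (f i x)) \<le> (SUP i\<in>I. ereal (f i z))) F"
  shows "((\<lambda>x. SUP i\<in>I. ereal (f i x)) \<longlongrightarrow> (SUP i\<in>I. ereal (f i z))) F"
proof (rule order_tendstoI)
  fix a assume "a < (SUP i\<in>I. ereal (f i z))"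
  with assms(1) show "eventually (\<lambda>x. a < (SUP i\<in>I. ereal (f i x))) F"
    by (rule eventually_less_SUP_ereal)
next
  fix a assume "(SUP i\<in>I. ereal (f i z)) < a"
  with assms(2) show "eventually (\<lambda>x. (SUP i\<in>I. ereal (f i x)) < a) F"
    by (auto elim: eventually_mono intro: le_less_trans)
qed

lemma affine_le_norm_mult:
  fixes b y :: "'a::real_inner"
  shows "\<alpha> + b \<bullet> y \<le> (\<bar>\<alpha>\<bar> + norm b) * (1 + norm y)"
proof -
  have "\<alpha> + b \<bullet> y \<le> \<bar>\<alpha>\<bar> + norm b * norm y"
    using norm_cauchy_schwarz[of b y] by linarith
  also have "\<dots> \<le> (\<bar>\<alpha>\<bar> + norm b) * (1 + norm y)"
    by (simp add: algebra_simps)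
  finally show ?thesis .
qed

lemma superlinear_minus_linear_bounded_above:
  fixes \<psi> :: "real \<Rightarrow> real"
  assumes superlin: "filterlim (\<lambda>t. \<psi> t / t) at_top at_top"
    and nonneg: "\<And>t. t \<ge> 0 \<Longrightarrow> \<psi> t \<ge> 0"
    and x: "x > 0"
  obtains B where "\<And>u. u \<ge> 0 \<Longrightarrow> c * u - \<psi> u * x \<le> B"
proof -
  from superlin have "eventually (\<lambda>t. \<psi> t / t \<ge> \<bar>c\<bar> / x) at_top"
    by (simp add: filterlim_at_top)
  then obtain T where T: "\<And>t. t \<ge> T \<Longrightarrow> \<psi> t / t \<ge> \<bar>c\<bar> / x"
    by (auto simp: eventually_at_top_linorder)
  define T' where "T' = max T 1"
  have "c * u - \<psi> u * x \<le> T' * \<bar>c\<bar>" if u: "u \<ge> 0" for u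
  proof (cases "u \<ge> T'")
    case True
    then have "u > 0" "\<psi> u / u \<ge> \<bar>c\<bar> / x"
      using T unfolding T'_def by auto
    then have "\<psi> u * x \<ge> \<bar>c\<bar> * u"
      using x by (simp add: field_simps)
    moreover have "c * u \<le> \<bar>c\<bar> * u"
      using u by (simp add: mult_right_mono)
    ultimately show ?thesis
      unfolding T'_def by (smt (verit) abs_ge_zero mult_nonneg_nonneg)
  next
    case False
    have "\<psi> u * x \<ge> 0"
      using nonneg[OF u] x by simp
    moreover have "c * u \<le> T' * \<bar>c\<bar>"
      using False u by (smt (verit) abs_ge_self abs_ge_zero mult.commute mult_mono)
    ultimately show ?thesis
      by simp
  qed
  then show ?thesis
    using that by blast
qed

lemma SUP_superlinear_penalty_less_infinity:
  fixes \<psi> :: "real \<Rightarrow> real" and S :: "(real \<times> 'a::real_inner) set"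
  assumes superlin: "filterlim (\<lambda>t. \<psi> t / t) at_top at_top"
    and nonneg: "\<And>t. t \<ge> 0 \<Longrightarrow> \<psi> t \<ge> 0"
    and x: "x > 0"
  shows "(SUP s\<in>S. ereal (fst s + snd s \<bullet> y - \<psi> (\<bar>fst s\<bar> + norm (snd s)) * x)) < \<infinity>"
proof -
  obtain B where B: "\<And>u. u \<ge> 0 \<Longrightarrow> (1 + norm y) * u - \<psi> u * x \<le> B"
    using superlinear_minus_linear_bounded_above[OF superlin nonneg x] by blast
  have "fst s + snd s \<bullet> y - \<psi> (\<bar>fst s\<bar> + norm (snd s)) * x \<le> B" for s
    using affine_le_norm_mult[of "fst s" "snd s" y] B[of "\<bar>fst s\<bar> + norm (snd s)"]
    by (simp add: algebra_simps)
  then have "(SUP s\<in>S. ereal (fst s + snd s \<bullet> y - \<psi> (\<bar>fst s\<bar> + norm (snd s)) * x)) \<le> ereal B"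
    by (intro SUP_least) simp
  then show ?thesis
    using le_less_trans by fastforce
qed

theorem mainTheorem6:
  fixes \<Phi> :: "real ^ 'n \<Rightarrow> ereal"
    and S :: "(real \<times> (real ^ 'n)) set"
    and \<psi> :: "real \<Rightarrow> real"
    and \<phi> :: "real \<times> (real ^ 'n) \<Rightarrow> ereal"
  assumes proper: "ereal_proper \<Phi>"
    and lsc: "ereal_lsc_on UNIV \<Phi>"
    and cvx: "ereal_convex_on UNIV \<Phi>"
    and S_ne: "S \<noteq> {}"
    and rep: "\<And>y. \<Phi> y = (SUP (\<alpha>, b)\<in>S. ereal (\<alpha> + b \<bullet> y))"
    and psi_nonneg: "\<And>t. t \<ge> 0 \<Longrightarrow> \<psi> t \<ge> 0"
    and psi_superlin: "filterlim (\<lambda>t. \<psi> t / t) at_top at_top"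
    and phi_def: "\<And>x y. \<phi> (x, y) =
        (SUP (\<alpha>, b)\<in>S. ereal (\<alpha> + b \<bullet> y - \<psi> (\<bar>\<alpha>\<bar> + norm b) * x))"
  shows "(ereal_convex_on ({0..} \<times> UNIV) \<phi>) \<and>
    (ereal_lsc_on ({0..} \<times> UNIV) \<phi>) \<and>
    (\<forall>x\<ge>0. \<forall>y. \<phi> (x, y) \<noteq> -\<infinity>) \<and>
    (\<forall>y. \<phi> (0, y) = \<Phi> y) \<and>
    (\<forall>x>0. \<forall>y. \<phi> (x, y) < \<infinity>) \<and>
    (\<forall>y. \<forall>x x'. 0 \<le> x \<and> x \<le> x' \<longrightarrow> \<phi> (x', y) \<le> \<phi> (x, y)) \<and>
    (\<forall>y. ((\<lambda>x. \<phi> (x, y)) \<longlongrightarrow> \<Phi> y) (at_right 0))"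
proof -
  define g :: "real \<times> (real ^ 'n) \<Rightarrow> real \<times> (real ^ 'n) \<Rightarrow> real" where
    "g s p = fst s + snd s \<bullet> snd p - \<psi> (\<bar>fst s\<bar> + norm (snd s)) * fst p" for s p
  have phi: "\<phi> = (\<lambda>p. SUP s\<in>S. ereal (g s p))"
    by (auto simp: fun_eq_iff phi_def g_def split_def)
  have Phi: "\<Phi> y = \<phi> (0, y)" for y
    by (simp add: rep phi_def)
  have g_convex: "convex_on D (g s)" if "convex D" for D s
    using that by (intro convex_onI) (auto simp: g_def inner_add_right algebra_simps)
  have g_continuous: "continuous_on D (g s)" for D s
    unfolding g_def by (intro continuous_intros)
  have antimono: "\<phi> (x', y) \<le> \<phi> (x, y)" if "0 \<le> x" "x \<le> x'" for x x' y
    unfolding phi using that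
    by (intro SUP_mono') (auto simp: g_def psi_nonneg intro: mult_left_mono)
  have finite: "\<phi> (x, y) < \<infinity>" if "x > 0" for x y
    using SUP_superlinear_penalty_less_infinity[OF psi_superlin psi_nonneg that]
    by (simp add: phi g_def)
  have not_minf: "\<phi> p \<noteq> -\<infinity>" for p
    using S_ne unfolding phi by (metis SUP_upper ereal_infty_less_eq(2) ex_in_conv MInfty_neq_ereal(1))
  have limit: "((\<lambda>x. \<phi> (x, y)) \<longlongrightarrow> \<Phi> y) (at_right 0)" for y
  proof -
    have "((\<lambda>x. g s (x, y)) \<longlongrightarrow> g s (0, y)) (at_right 0)" for s
      unfolding g_def by (intro tendsto_intros)
    moreover have "eventually (\<lambda>x. \<phi> (x, y) \<le> \<phi> (0, y)) (at_right 0)"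
      using eventually_at_right_less[of 0] by (rule eventually_mono) (simp add: antimono)
    ultimately show ?thesis
      unfolding Phi phi by (intro tendsto_SUP_ereal_if_eventually_le[where f = "\<lambda>s x. g s (x, y)"])
  qed
  show ?thesis
    unfolding phi using antimono finite not_minf limit
    by (intro conjI ereal_convex_on_SUP ereal_lsc_on_SUP g_convex g_continuous convex_Times
        convex_real_interval convex_UNIV) (simp_all add: Phi phi)
qed

end
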